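(* In any execution of $\mathcal{U}$, suppose that at time $T$ a process $p$ executes line 12 for an operation $o$ and this GCAS returns true, and at a time $T' > T$ a process $p'$ executes line 12 also for $o$, in some iteration of the while loop. Then $p'$ executed line 5 in that same iteration at some time $T_1 < T$.
   Context: Model: an asynchronous shared-memory system with possibly infinitely many processes, any of which may crash, communicating via atomic shared objects. A fetch-and-increment (F\&I) object stores an integer; F\&I$(C)$ atomically returns the current value and increments it. A generalized-compare-and-swap (GCAS) object $O$ stores a value and supports Read$(O)$ and GCAS$(c, O, v_1, v_2)$, which atomically does: if $c(\text{current value of } O, v_1)$ holds then set $O := v_2$ and return true, else return false. Tuples are compared componentwise for $=$; GCAS$(>, A, (t,-,-), v)$ succeeds iff the time field of $A$ is strictly greater than $t$. Implemented type $\mathcal{T} = (OP, RES, Q, \delta)$ with initial state $s_0$; a procedure $apply_{\mathcal{T}}(o,s)$ returns some $(s',r)$ with $(s,o,s',r)\in\delta$. $NULL$ is a value different from every response of $\mathcal{T}$, and $NOOP$ is a name different from every operation of $\mathcal{T}$. Algorithm $\mathcal{U}$: each process $p$ owns a GCAS object $H_p$ with fields $(time, response)$. Shared objects: F\&I object $C$, initially $1$; GCAS object $A$ with fields $(time, op, ptr)$, initially $(0, NOOP, h(NOOP))$, where $h(NOOP)$ is a pointer to an immutable location containing $(0,\perp)$; GCAS object $S$ with fields $(time, state, response, ptr)$, initially $(0, s_0, \perp, h(NOOP))$. Process $p$ performs operation $o$ by calling DoOp$(o)$: (1) DoOp$(o)$ invoked; (2) $t := $ F\&I$(C)$; (3)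 $H_p := (t, NULL)$; (4) while $H_p = (t, NULL)$ do: (5) $(t^*, s^*, r^*, roptr^* ) := S$; (6) GCAS$(=, *roptr^*, (t^*, NULL), (t^*, r^* ))$; (7) GCAS$(>, A, (t,-,-), (t, o, \&H_p))$; (8) $(t', o', roptr') := A$; (9) $(\hat t, \hat r) := *roptr'$; (10) if $(\hat t,\hat r) = (t', NULL)$ then (11) $(s', r') := apply_{\mathcal{T}}(o', s^* )$; (12) GCAS$(=, S, (t^*,s^*,r^*,roptr^* ), (t', s', r', roptr'))$; (13) else GCAS$(=, A, (t', o', roptr'), (t, o, \&H_p))$; end while; (14) return $H_p.response$. Notation: an "operation" $o$ means one invocation of DoOp$(o)$ (or the initial $NOOP$). $p(o)$ is the process executing it; $t(o)$ is the value returned by its F\&I at line 2, or $\infty$ if line 2 has not been executed; $h(o)$ is $H_{p(o)}$. For $NOOP$: $t(NOOP)=0$ and $h(NOOP)$ is the immutable location containing $(0,\perp)$. "Line 12 is executed for $o$" means the new value written in that GCAS has the form $(t(o), -, r, h(o))$ (equivalently, the process read $(t(o), o, h(o))$ from $A$ at line 8 in that iteration). *)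

theory Defs
  imports Main
begin

section \<open>Model of algorithm U (one atomic shared-memory step per line)\<close>

datatype 'r rval = Null | Bot | Resp 'r

datatype 'o opname = NOOP | Op 'o

text \<open>Pointers to response locations: h(NOOP) (immutable, contains (0,Bot)) or H_q.\<close>
datatype 'p ptr = HNoop | HProc 'p

text \<open>Program counter: Idle (no pending DoOp) or the next line to be executed.\<close>
datatype pcv = Idle | L2 | L3 | L4 | L5 | L6 | L7 | L8 | L9 | L10 | L11 | L12 | L13 | L14

record ('o,'s,'r,'p) loc =
  pc   :: pcv
  opv  :: 'o            \<comment> \<open>argument o of DoOp\<close>
  tv   :: nat
  tS   :: nat           \<comment> \<open>t*\<close>
  sS   :: 's            \<comment> \<open>s*\<close>
  rS   :: "'r rval"     \<comment> \<open>r*\<close>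
  pS   :: "'p ptr"      \<comment> \<open>roptr*\<close>
  tA   :: nat           \<comment> \<open>t'\<close>
  oA   :: "'o opname"   \<comment> \<open>o'\<close>
  pA   :: "'p ptr"      \<comment> \<open>roptr'\<close>
  th   :: nat           \<comment> \<open>t hat\<close>
  rh   :: "'r rval"     \<comment> \<open>r hat\<close>
  sN   :: 's            \<comment> \<open>s'\<close>
  rN   :: 'r            \<comment> \<open>r'\<close>

record ('o,'s,'r,'p) conf =
  Cv  :: nat
  Av  :: "nat \<times> 'o opname \<times> 'p ptr"
  Sv  :: "nat \<times> 's \<times> 'r rval \<times> 'p ptr"
  Hv  :: "'p \<Rightarrow> nat \<times> 'r rval"
  lc  :: "'p \<Rightarrow> ('o,'s,'r,'p) loc"

definition deref :: "('p \<Rightarrow> nat \<times> 'r rval) \<Rightarrow> 'p ptr \<Rightarrow> nat \<times> 'r rval" where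
  "deref H x = (case x of HNoop \<Rightarrow> (0, Bot) | HProc q \<Rightarrow> H q)"

definition setloc :: "('o,'s,'r,'p) conf \<Rightarrow> 'p \<Rightarrow> ('o,'s,'r,'p) loc \<Rightarrow> ('o,'s,'r,'p) conf" where
  "setloc c p l = c\<lparr>lc := (lc c)(p := l)\<rparr>"

text \<open>One atomic step of process p; \<open>\<delta>\<close> is the transition relation of T
  (line 11 may return any (s',r') with \<open>(s*, o', s', r') \<in> \<delta>\<close>).\<close>
definition ustep :: "('s \<times> 'o \<times> 's \<times> 'r) set \<Rightarrow> 'p \<Rightarrow> ('o,'s,'r,'p) conf \<Rightarrow> ('o,'s,'r,'p) conf \<Rightarrow> bool" where
  "ustep \<delta> p c c' \<longleftrightarrow> (let l = lc c p in
     case pc l of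
       Idle \<Rightarrow> (\<exists>x. c' = setloc c p (l\<lparr>pc := L2, opv := x\<rparr>))
     | L2 \<Rightarrow> c' = (setloc c p (l\<lparr>pc := L3, tv := Cv c\<rparr>))\<lparr>Cv := Cv c + 1\<rparr>
     | L3 \<Rightarrow> c' = (setloc c p (l\<lparr>pc := L4\<rparr>))\<lparr>Hv := (Hv c)(p := (tv l, Null))\<rparr>
     | L4 \<Rightarrow> c' = setloc c p (l\<lparr>pc := (if Hv c p = (tv l, Null) then L5 else L14)\<rparr>)
     | L5 \<Rightarrow> (case Sv c of (t1, s1, r1, p1) \<Rightarrow>
               c' = setloc c p (l\<lparr>pc := L6, tS := t1, sS := s1, rS := r1, pS := p1\<rparr>))
     | L6 \<Rightarrow> c' = (setloc c p (l\<lparr>pc := L7\<rparr>))\<lparr>Hv :=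
               (case pS l of HNoop \<Rightarrow> Hv c
                | HProc q \<Rightarrow> (if Hv c q = (tS l, Null) then (Hv c)(q := (tS l, rS l)) else Hv c))\<rparr>
     | L7 \<Rightarrow> c' = (setloc c p (l\<lparr>pc := L8\<rparr>))\<lparr>Av :=
               (if fst (Av c) > tv l then (tv l, Op (opv l), HProc p) else Av c)\<rparr>
     | L8 \<Rightarrow> (case Av c of (t1, o1, p1) \<Rightarrow>
               c' = setloc c p (l\<lparr>pc := L9, tA := t1, oA := o1, pA := p1\<rparr>))
     | L9 \<Rightarrow> (case deref (Hv c) (pA l) of (t1, r1) \<Rightarrow>
               c' = setloc c p (l\<lparr>pc := L10, th := t1, rh := r1\<rparr>))
     | L10 \<Rightarrow> c' = setloc c p (l\<lparr>pc := (if (th l, rh l) = (tA l, Null) then L11 else L13)\<rparr>)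
     | L11 \<Rightarrow> (\<exists>x s1 r1. oA l = Op x \<and> (sS l, x, s1, r1) \<in> \<delta> \<and>
               c' = setloc c p (l\<lparr>pc := L12, sN := s1, rN := r1\<rparr>))
     | L12 \<Rightarrow> c' = (setloc c p (l\<lparr>pc := L4\<rparr>))\<lparr>Sv :=
               (if Sv c = (tS l, sS l, rS l, pS l) then (tA l, sN l, Resp (rN l), pA l) else Sv c)\<rparr>
     | L13 \<Rightarrow> c' = (setloc c p (l\<lparr>pc := L4\<rparr>))\<lparr>Av :=
               (if Av c = (tA l, oA l, pA l) then (tv l, Op (opv l), HProc p) else Av c)\<rparr>
     | L14 \<Rightarrow> c' = setloc c p (l\<lparr>pc := Idle\<rparr>))"

text \<open>Initial configuration (H_p and the local variables other than pc are arbitrary).\<close>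
definition uinit :: "'s \<Rightarrow> ('o,'s,'r,'p) conf \<Rightarrow> bool" where
  "uinit s0 c \<longleftrightarrow> Cv c = 1 \<and> Av c = (0, NOOP, HNoop) \<and> Sv c = (0, s0, Bot, HNoop)
                  \<and> (\<forall>p. pc (lc c p) = Idle)"

text \<open>An execution prefix of length n: configurations \<open>\<sigma> 0, ..., \<sigma> n\<close>;
  step i (at time i) is taken by process \<open>sch i\<close>. Crashed processes simply take no more steps.\<close>
definition uexec :: "('s \<times> 'o \<times> 's \<times> 'r) set \<Rightarrow> 's \<Rightarrow> (nat \<Rightarrow> ('o,'s,'r,'p) conf) \<Rightarrow> (nat \<Rightarrow> 'p) \<Rightarrow> nat \<Rightarrow> bool" where
  "uexec \<delta> s0 \<sigma> sch n \<longleftrightarrow> uinit s0 (\<sigma> 0) \<and> (\<forall>i<n. ustep \<delta> (sch i) (\<sigma> i) (\<sigma> (Suc i)))"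

definition exec_line :: "(nat \<Rightarrow> ('o,'s,'r,'p) conf) \<Rightarrow> (nat \<Rightarrow> 'p) \<Rightarrow> nat \<Rightarrow> 'p \<Rightarrow> pcv \<Rightarrow> bool" where
  "exec_line \<sigma> sch i p k \<longleftrightarrow> sch i = p \<and> pc (lc (\<sigma> i) p) = k"

text \<open>Operations: the initial NOOP, or the DoOp invocation of process q whose F&I returned t.\<close>
datatype 'p operation = OpNOOP | Inv 'p nat

fun t_of :: "'p operation \<Rightarrow> nat" where
  "t_of OpNOOP = 0" | "t_of (Inv q t) = t"

fun h_of :: "'p operation \<Rightarrow> 'p ptr" where
  "h_of OpNOOP = HNoop" | "h_of (Inv q t) = HProc q"

definition is_operation :: "(nat \<Rightarrow> ('o,'s,'r,'p) conf) \<Rightarrow> (nat \<Rightarrow> 'p) \<Rightarrow> nat \<Rightarrow> 'p operation \<Rightarrow> bool" where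
  "is_operation \<sigma> sch n op \<longleftrightarrow> (case op of OpNOOP \<Rightarrow> True
      | Inv q t \<Rightarrow> (\<exists>i<n. exec_line \<sigma> sch i q L2 \<and> Cv (\<sigma> i) = t))"

text \<open>Line 12 is executed at time i by p for o: the new value written has the form (t(o),-,r,h(o)).\<close>
definition line12_for :: "(nat \<Rightarrow> ('o,'s,'r,'p) conf) \<Rightarrow> (nat \<Rightarrow> 'p) \<Rightarrow> nat \<Rightarrow> 'p \<Rightarrow> 'p operation \<Rightarrow> bool" where
  "line12_for \<sigma> sch i p op \<longleftrightarrow> exec_line \<sigma> sch i p L12 \<and>
      tA (lc (\<sigma> i) p) = t_of op \<and> pA (lc (\<sigma> i) p) = h_of op"

definition gcas12_true :: "(nat \<Rightarrow> ('o,'s,'r,'p) conf) \<Rightarrow> nat \<Rightarrow> 'p \<Rightarrow> bool" where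
  "gcas12_true \<sigma> i p \<longleftrightarrow> (let l = lc (\<sigma> i) p in Sv (\<sigma> i) = (tS l, sS l, rS l, pS l))"

end

theory Submission
  imports Defs
begin

text \<open>Write the operation as \<open>o = (t, q)\<close>. Process \<open>p'\<close> passed the test of line 10, so the read of
  \<open>H\<^sub>q\<close> at line 9 preceding \<open>T'\<close> returned \<open>(t, NULL)\<close>. Suppose its last read of \<open>S\<close> (line 5) came after
  the successful GCAS at \<open>T\<close>, which installed \<open>o\<close> in \<open>S\<close>. Then either \<open>S\<close> still held \<open>o\<close>, and \<open>p'\<close> itself
  answered \<open>H\<^sub>q\<close> at line 6, or \<open>S\<close> had meanwhile been overwritten by a line 12 whose process had
  read \<open>o\<close> from \<open>S\<close> and answered \<open>H\<^sub>q\<close> before. Either way \<open>H\<^sub>q\<close> was already different from \<open>(t, NULL)\<close>,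
  and it can return to that value only through \<open>q\<close>'s line 3 with ticket \<open>t\<close>, which can no longer happen
  once \<open>t\<close> has been issued and \<open>q\<close> has left line 3.\<close>

definition A_stamp_issued :: "('o,'s,'r,'p) conf \<Rightarrow> bool" where
  "A_stamp_issued c \<longleftrightarrow> fst (Av c) < Cv c"

definition S_stamp_issued :: "('o,'s,'r,'p) conf \<Rightarrow> bool" where
  "S_stamp_issued c \<longleftrightarrow> fst (Sv c) < Cv c"

definition ticket_issued :: "('o,'s,'r,'p) conf \<Rightarrow> bool" where
  "ticket_issued c \<longleftrightarrow> (\<forall>x. pc (lc c x) \<notin> {Idle, L2} \<longrightarrow> tv (lc c x) < Cv c)"

definition read_A_stamp_issued :: "('o,'s,'r,'p) conf \<Rightarrow> bool" where
  "read_A_stamp_issued c \<longleftrightarrow> (\<forall>x. pc (lc c x) \<in> {L9,L10,L11,L12} \<longrightarrow> tA (lc c x) < Cv c)"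

definition read_S_stamp_issued :: "('o,'s,'r,'p) conf \<Rightarrow> bool" where
  "read_S_stamp_issued c \<longleftrightarrow>
     (\<forall>x. pc (lc c x) \<in> {L6,L7,L8,L9,L10,L11,L12} \<longrightarrow> tS (lc c x) < Cv c)"

definition A_slot_not_resetting :: "('o,'s,'r,'p) conf \<Rightarrow> bool" where
  "A_slot_not_resetting c \<longleftrightarrow>
     (\<forall>q. snd (snd (Av c)) = HProc q \<longrightarrow> \<not> (pc (lc c q) = L3 \<and> tv (lc c q) = fst (Av c)))"

definition S_slot_not_resetting :: "('o,'s,'r,'p) conf \<Rightarrow> bool" where
  "S_slot_not_resetting c \<longleftrightarrow>
     (\<forall>q. snd (snd (snd (Sv c))) = HProc q \<longrightarrow> \<not> (pc (lc c q) = L3 \<and> tv (lc c q) = fst (Sv c)))"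

definition read_A_slot_not_resetting :: "('o,'s,'r,'p) conf \<Rightarrow> bool" where
  "read_A_slot_not_resetting c \<longleftrightarrow> (\<forall>x q. pc (lc c x) \<in> {L9,L10,L11,L12} \<and> pA (lc c x) = HProc q
     \<longrightarrow> \<not> (pc (lc c q) = L3 \<and> tv (lc c q) = tA (lc c x)))"

definition read_S_slot_not_resetting :: "('o,'s,'r,'p) conf \<Rightarrow> bool" where
  "read_S_slot_not_resetting c \<longleftrightarrow> (\<forall>x q. pc (lc c x) \<in> {L6,L7,L8,L9,L10,L11,L12} \<and> pS (lc c x) = HProc q
     \<longrightarrow> \<not> (pc (lc c q) = L3 \<and> tv (lc c q) = tS (lc c x)))"

definition S_response_non_null :: "('o,'s,'r,'p) conf \<Rightarrow> bool" where
  "S_response_non_null c \<longleftrightarrow> fst (snd (snd (Sv c))) \<noteq> Null"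

definition read_S_response_non_null :: "('o,'s,'r,'p) conf \<Rightarrow> bool" where
  "read_S_response_non_null c \<longleftrightarrow> (\<forall>x. pc (lc c x) \<in> {L6,L7,L8,L9,L10,L11,L12} \<longrightarrow> rS (lc c x) \<noteq> Null)"

text \<open>Line 6 answers the slot read from \<open>S\<close> with a non-\<open>NULL\<close> response; only its owner's line 3
  could make it \<open>(t*, NULL)\<close> again, and \<open>read_S_slot_not_resetting\<close> excludes that.\<close>
definition read_S_slot_answered :: "('o,'s,'r,'p) conf \<Rightarrow> bool" where
  "read_S_slot_answered c \<longleftrightarrow> (\<forall>x q. pc (lc c x) \<in> {L7,L8,L9,L10,L11,L12} \<and> pS (lc c x) = HProc q
     \<longrightarrow> Hv c q \<noteq> (tS (lc c x), Null))"

definition check_passed :: "('o,'s,'r,'p) conf \<Rightarrow> bool" where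
  "check_passed c \<longleftrightarrow> (\<forall>x. pc (lc c x) \<in> {L11,L12} \<longrightarrow> th (lc c x) = tA (lc c x) \<and> rh (lc c x) = Null)"

definition invariant :: "('o,'s,'r,'p) conf \<Rightarrow> bool" where
  "invariant c \<longleftrightarrow> A_stamp_issued c \<and> S_stamp_issued c \<and> ticket_issued c \<and>
     read_A_stamp_issued c \<and> read_S_stamp_issued c \<and>
     A_slot_not_resetting c \<and> S_slot_not_resetting c \<and>
     read_A_slot_not_resetting c \<and> read_S_slot_not_resetting c \<and>
     S_response_non_null c \<and> read_S_response_non_null c \<and>
     read_S_slot_answered c \<and> check_passed c"

lemmas ustep_simps = ustep_def Let_def setloc_def

lemma invariant_init: "uinit s0 c \<Longrightarrow> invariant c"
  by (simp add: uinit_def invariant_def A_stamp_issued_def S_stamp_issued_def ticket_issued_def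
      read_A_stamp_issued_def read_S_stamp_issued_def A_slot_not_resetting_def S_slot_not_resetting_def
      read_A_slot_not_resetting_def read_S_slot_not_resetting_def S_response_non_null_def
      read_S_response_non_null_def read_S_slot_answered_def check_passed_def)

lemma A_stamp_issued_step:
  "ustep \<delta> p c c' \<Longrightarrow> A_stamp_issued c \<Longrightarrow> ticket_issued c \<Longrightarrow> A_stamp_issued c'"
  by (cases "pc (lc c p)")
    (auto simp: ustep_simps A_stamp_issued_def ticket_issued_def split: if_splits prod.splits)

lemma S_stamp_issued_step:
  "ustep \<delta> p c c' \<Longrightarrow> S_stamp_issued c \<Longrightarrow> read_A_stamp_issued c \<Longrightarrow> S_stamp_issued c'"
  by (cases "pc (lc c p)")
    (auto simp: ustep_simps S_stamp_issued_def read_A_stamp_issued_def split: if_splits prod.splits)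

lemma ticket_issued_step: "ustep \<delta> p c c' \<Longrightarrow> ticket_issued c \<Longrightarrow> ticket_issued c'"
  by (cases "pc (lc c p)")
    (auto simp: ustep_simps ticket_issued_def split: if_splits prod.splits ptr.splits)

lemma read_A_stamp_issued_step:
  "ustep \<delta> p c c' \<Longrightarrow> read_A_stamp_issued c \<Longrightarrow> A_stamp_issued c \<Longrightarrow> read_A_stamp_issued c'"
  by (cases "pc (lc c p)")
    (auto simp: ustep_simps read_A_stamp_issued_def A_stamp_issued_def split: if_splits prod.splits ptr.splits)

lemma read_S_stamp_issued_step:
  "ustep \<delta> p c c' \<Longrightarrow> read_S_stamp_issued c \<Longrightarrow> S_stamp_issued c \<Longrightarrow> read_S_stamp_issued c'"
  by (cases "pc (lc c p)")
    (auto simp: ustep_simps read_S_stamp_issued_def S_stamp_issued_def split: if_splits prod.splits ptr.splits)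

lemma A_slot_not_resetting_step:
  "ustep \<delta> p c c' \<Longrightarrow> A_slot_not_resetting c \<Longrightarrow> A_stamp_issued c \<Longrightarrow> A_slot_not_resetting c'"
  by (cases "pc (lc c p)")
    (auto simp: ustep_simps A_slot_not_resetting_def A_stamp_issued_def split: if_splits prod.splits ptr.splits)

lemma S_slot_not_resetting_step:
  "ustep \<delta> p c c' \<Longrightarrow> S_slot_not_resetting c \<Longrightarrow> S_stamp_issued c \<Longrightarrow> read_A_slot_not_resetting c
   \<Longrightarrow> S_slot_not_resetting c'"
  by (cases "pc (lc c p)")
    (auto simp: ustep_simps S_slot_not_resetting_def S_stamp_issued_def read_A_slot_not_resetting_def
      split: if_splits prod.splits ptr.splits)

lemma read_A_slot_not_resetting_step:
  "ustep \<delta> p c c' \<Longrightarrow> read_A_slot_not_resetting c \<Longrightarrow> read_A_stamp_issued c \<Longrightarrow> A_slot_not_resetting c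
   \<Longrightarrow> read_A_slot_not_resetting c'"
  by (cases "pc (lc c p)")
    (auto simp: ustep_simps read_A_slot_not_resetting_def read_A_stamp_issued_def A_slot_not_resetting_def
      split: if_splits prod.splits ptr.splits)

lemma read_S_slot_not_resetting_step:
  "ustep \<delta> p c c' \<Longrightarrow> read_S_slot_not_resetting c \<Longrightarrow> read_S_stamp_issued c \<Longrightarrow> S_slot_not_resetting c
   \<Longrightarrow> read_S_slot_not_resetting c'"
  by (cases "pc (lc c p)")
    (auto simp: ustep_simps read_S_slot_not_resetting_def read_S_stamp_issued_def S_slot_not_resetting_def
      split: if_splits prod.splits ptr.splits)

lemma S_response_non_null_step:
  "ustep \<delta> p c c' \<Longrightarrow> S_response_non_null c \<Longrightarrow> S_response_non_null c'"
  by (cases "pc (lc c p)")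
    (auto simp: ustep_simps S_response_non_null_def split: if_splits prod.splits ptr.splits)

lemma read_S_response_non_null_step:
  "ustep \<delta> p c c' \<Longrightarrow> read_S_response_non_null c \<Longrightarrow> S_response_non_null c
   \<Longrightarrow> read_S_response_non_null c'"
  by (cases "pc (lc c p)")
    (auto simp: ustep_simps read_S_response_non_null_def S_response_non_null_def
      split: if_splits prod.splits ptr.splits)

lemma read_S_slot_answered_step:
  "ustep \<delta> p c c' \<Longrightarrow> read_S_slot_answered c \<Longrightarrow> read_S_response_non_null c
   \<Longrightarrow> read_S_slot_not_resetting c \<Longrightarrow> read_S_slot_answered c'"
  by (cases "pc (lc c p)")
    (auto simp: ustep_simps read_S_slot_answered_def read_S_response_non_null_def
      read_S_slot_not_resetting_def split: if_splits prod.splits ptr.splits)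

lemma check_passed_step: "ustep \<delta> p c c' \<Longrightarrow> check_passed c \<Longrightarrow> check_passed c'"
  by (cases "pc (lc c p)") (auto simp: ustep_simps check_passed_def split: if_splits prod.splits)

lemma invariant_step: "ustep \<delta> p c c' \<Longrightarrow> invariant c \<Longrightarrow> invariant c'"
  unfolding invariant_def
  using A_stamp_issued_step S_stamp_issued_step ticket_issued_step read_A_stamp_issued_step
    read_S_stamp_issued_step A_slot_not_resetting_step S_slot_not_resetting_step
    read_A_slot_not_resetting_step read_S_slot_not_resetting_step S_response_non_null_step
    read_S_response_non_null_step read_S_slot_answered_step check_passed_step
  by metis

lemma uexec_step: "uexec \<delta> s0 \<sigma> sch n \<Longrightarrow> i < n \<Longrightarrow> ustep \<delta> (sch i) (\<sigma> i) (\<sigma> (Suc i))"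
  by (simp add: uexec_def)

lemma invariant_reachable:
  assumes "uexec \<delta> s0 \<sigma> sch n" "k \<le> n"
  shows "invariant (\<sigma> k)"
  using assms(2)
proof (induction k)
  case 0
  then show ?case using assms(1) invariant_init by (auto simp: uexec_def)
next
  case (Suc k)
  then show ?case using invariant_step[OF uexec_step[OF assms(1)]] by simp
qed

lemma ustep_other_local: "ustep \<delta> p c c' \<Longrightarrow> x \<noteq> p \<Longrightarrow> lc c' x = lc c x"
  by (cases "pc (lc c p)") (auto simp: ustep_simps split: prod.splits)

lemma ustep_counter_mono: "ustep \<delta> p c c' \<Longrightarrow> Cv c \<le> Cv c'"
  by (cases "pc (lc c p)") (auto simp: ustep_simps split: prod.splits)

lemma ustep_S_changed:
  "ustep \<delta> p c c' \<Longrightarrow> Sv c' \<noteq> Sv c \<Longrightarrow>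
   pc (lc c p) = L12 \<and> Sv c = (tS (lc c p), sS (lc c p), rS (lc c p), pS (lc c p))"
  by (cases "pc (lc c p)") (auto simp: ustep_simps split: prod.splits if_splits)

lemma ustep_line12_success:
  "ustep \<delta> p c c' \<Longrightarrow> pc (lc c p) = L12 \<Longrightarrow>
   Sv c = (tS (lc c p), sS (lc c p), rS (lc c p), pS (lc c p)) \<Longrightarrow>
   Sv c' = (tA (lc c p), sN (lc c p), Resp (rN (lc c p)), pA (lc c p))"
  by (auto simp: ustep_simps)

lemma ustep_slot_nulled:
  "ustep \<delta> p c c' \<Longrightarrow> Hv c' q = (t, Null) \<Longrightarrow> Hv c q \<noteq> (t, Null) \<Longrightarrow>
   p = q \<and> pc (lc c p) = L3 \<and> tv (lc c p) = t"
  by (cases "pc (lc c p)") (auto simp: ustep_simps split: prod.splits if_splits ptr.splits)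

lemma ustep_enters_L3:
  "ustep \<delta> p c c' \<Longrightarrow> pc (lc c' q) = L3 \<Longrightarrow> \<not> (pc (lc c q) = L3 \<and> tv (lc c q) = tv (lc c' q)) \<Longrightarrow>
   Cv c = tv (lc c' q)"
  by (cases "pc (lc c p)") (auto simp: ustep_simps split: prod.splits if_splits)

lemma ustep_reads_S:
  assumes "ustep \<delta> p c c'" "pc (lc c' p) \<in> {L6,L7,L8,L9,L10,L11,L12}"
  shows "pc (lc c p) = L5 \<and> (\<exists>s r. Sv c = (tS (lc c' p), s, r, pS (lc c' p))) \<or>
    pc (lc c p) \<in> {L6,L7,L8,L9,L10,L11} \<and> tS (lc c' p) = tS (lc c p) \<and> pS (lc c' p) = pS (lc c p)"
  using assms by (cases "pc (lc c p)") (auto simp: ustep_simps split: prod.splits if_splits)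

lemma ustep_reads_slot:
  assumes "ustep \<delta> p c c'" "pc (lc c' p) \<in> {L10,L11,L12}"
  shows "pc (lc c p) = L9 \<and> deref (Hv c) (pA (lc c' p)) = (th (lc c' p), rh (lc c' p)) \<and>
      tS (lc c' p) = tS (lc c p) \<and> pS (lc c' p) = pS (lc c p) \<or>
    pc (lc c p) \<in> {L10,L11} \<and> tS (lc c' p) = tS (lc c p) \<and> pS (lc c' p) = pS (lc c p) \<and>
      pA (lc c' p) = pA (lc c p) \<and> th (lc c' p) = th (lc c p) \<and> rh (lc c' p) = rh (lc c p)"
  using assms by (cases "pc (lc c p)") (auto simp: ustep_simps split: prod.splits if_splits)

lemma last_S_read:
  assumes ex: "uexec \<delta> s0 \<sigma> sch n"
    and "k \<le> n" "pc (lc (\<sigma> k) x) \<in> {L6,L7,L8,L9,L10,L11,L12}"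
  shows "\<exists>j<k. exec_line \<sigma> sch j x L5 \<and> (\<forall>m. j < m \<and> m < k \<longrightarrow> \<not> exec_line \<sigma> sch m x L5) \<and>
    (\<exists>s r. Sv (\<sigma> j) = (tS (lc (\<sigma> k) x), s, r, pS (lc (\<sigma> k) x)))" (is "\<exists>j<k. ?P k j")
  using assms(2,3)
proof (induction k)
  case 0
  then show ?case using ex by (auto simp: uexec_def uinit_def)
next
  case (Suc k)
  have step: "ustep \<delta> (sch k) (\<sigma> k) (\<sigma> (Suc k))" using uexec_step[OF ex] Suc.prems(1) by simp
  show ?case
  proof (cases "sch k = x")
    case True
    from ustep_reads_S[OF step[unfolded True] Suc.prems(2)] show ?thesis
    proof
      assume "pc (lc (\<sigma> k) x) = L5 \<and> (\<exists>s r. Sv (\<sigma> k) = (tS (lc (\<sigma> (Suc k)) x), s, r, pS (lc (\<sigma> (Suc k)) x)))"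
      then show ?thesis using True by (auto simp: exec_line_def)
    next
      assume "pc (lc (\<sigma> k) x) \<in> {L6,L7,L8,L9,L10,L11} \<and>
        tS (lc (\<sigma> (Suc k)) x) = tS (lc (\<sigma> k) x) \<and> pS (lc (\<sigma> (Suc k)) x) = pS (lc (\<sigma> k) x)"
      moreover obtain j where "j < k" and "?P k j" using Suc calculation by auto
      ultimately show ?thesis using True by (intro exI[of _ j]) (auto simp: exec_line_def less_Suc_eq)
    qed
  next
    case False
    then have same: "lc (\<sigma> (Suc k)) x = lc (\<sigma> k) x" using ustep_other_local[OF step] by simp
    then obtain j where "j < k" and "?P k j" using Suc by auto
    then show ?thesis using False same by (intro exI[of _ j]) (auto simp: exec_line_def less_Suc_eq)
  qed
qed

lemma last_slot_read:
  assumes ex: "uexec \<delta> s0 \<sigma> sch n"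
    and "k \<le> n" "pc (lc (\<sigma> k) x) \<in> {L10,L11,L12}"
  shows "\<exists>j<k. exec_line \<sigma> sch j x L9 \<and> (\<forall>m. j < m \<and> m < k \<longrightarrow> \<not> exec_line \<sigma> sch m x L5) \<and>
    tS (lc (\<sigma> j) x) = tS (lc (\<sigma> k) x) \<and> pS (lc (\<sigma> j) x) = pS (lc (\<sigma> k) x) \<and>
    deref (Hv (\<sigma> j)) (pA (lc (\<sigma> k) x)) = (th (lc (\<sigma> k) x), rh (lc (\<sigma> k) x))"
    (is "\<exists>j<k. ?P k j")
  using assms(2,3)
proof (induction k)
  case 0
  then show ?case using ex by (auto simp: uexec_def uinit_def)
next
  case (Suc k)
  have step: "ustep \<delta> (sch k) (\<sigma> k) (\<sigma> (Suc k))" using uexec_step[OF ex] Suc.prems(1) by simp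
  show ?case
  proof (cases "sch k = x")
    case True
    from ustep_reads_slot[OF step[unfolded True] Suc.prems(2)] show ?thesis
    proof
      assume "pc (lc (\<sigma> k) x) = L9 \<and>
        deref (Hv (\<sigma> k)) (pA (lc (\<sigma> (Suc k)) x)) = (th (lc (\<sigma> (Suc k)) x), rh (lc (\<sigma> (Suc k)) x)) \<and>
        tS (lc (\<sigma> (Suc k)) x) = tS (lc (\<sigma> k) x) \<and> pS (lc (\<sigma> (Suc k)) x) = pS (lc (\<sigma> k) x)"
      then show ?thesis using True by (auto simp: exec_line_def)
    next
      assume "pc (lc (\<sigma> k) x) \<in> {L10,L11} \<and>
        tS (lc (\<sigma> (Suc k)) x) = tS (lc (\<sigma> k) x) \<and> pS (lc (\<sigma> (Suc k)) x) = pS (lc (\<sigma> k) x) \<and>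
        pA (lc (\<sigma> (Suc k)) x) = pA (lc (\<sigma> k) x) \<and> th (lc (\<sigma> (Suc k)) x) = th (lc (\<sigma> k) x) \<and>
        rh (lc (\<sigma> (Suc k)) x) = rh (lc (\<sigma> k) x)"
      moreover obtain j where "j < k" and "?P k j" using Suc calculation by auto
      ultimately show ?thesis using True by (intro exI[of _ j]) (auto simp: exec_line_def less_Suc_eq)
    qed
  next
    case False
    then have same: "lc (\<sigma> (Suc k)) x = lc (\<sigma> k) x" using ustep_other_local[OF step] by simp
    then obtain j where "j < k" and "?P k j" using Suc by auto
    then show ?thesis using False same by (intro exI[of _ j]) (auto simp: exec_line_def less_Suc_eq)
  qed
qed

lemma S_overwritten:
  assumes ex: "uexec \<delta> s0 \<sigma> sch n" and "a \<le> b" "b \<le> n" "Sv (\<sigma> b) \<noteq> Sv (\<sigma> a)"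
  shows "\<exists>u. a \<le> u \<and> u < b \<and> pc (lc (\<sigma> u) (sch u)) = L12 \<and>
    Sv (\<sigma> a) = (tS (lc (\<sigma> u) (sch u)), sS (lc (\<sigma> u) (sch u)), rS (lc (\<sigma> u) (sch u)), pS (lc (\<sigma> u) (sch u)))"
  using assms(2-4)
proof (induction b rule: dec_induct)
  case base
  then show ?case by simp
next
  case (step b)
  show ?case
  proof (cases "Sv (\<sigma> b) = Sv (\<sigma> a)")
    case True
    then show ?thesis
      using ustep_S_changed[OF uexec_step[OF ex]] step by (metis Suc_le_lessD less_Suc_eq)
  next
    case False
    then show ?thesis using step by (auto intro: less_SucI)
  qed
qed

definition slot_settled :: "('o,'s,'r,'p) conf \<Rightarrow> nat \<Rightarrow> 'p \<Rightarrow> bool" where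
  "slot_settled c t q \<longleftrightarrow> Hv c q \<noteq> (t, Null) \<and> t < Cv c \<and> \<not> (pc (lc c q) = L3 \<and> tv (lc c q) = t)"

lemma slot_settled_step:
  assumes step: "ustep \<delta> p c c'" and settled: "slot_settled c t q"
  shows "slot_settled c' t q"
proof -
  have issued: "t < Cv c" "Cv c \<le> Cv c'"
    using settled ustep_counter_mono[OF step] by (auto simp: slot_settled_def)
  have no_reset: "\<not> (pc (lc c' q) = L3 \<and> tv (lc c' q) = t)"
    using ustep_enters_L3[OF step, of q] settled issued by (auto simp: slot_settled_def)
  have "Hv c' q \<noteq> (t, Null)"
    using ustep_slot_nulled[OF step, of q t] settled by (auto simp: slot_settled_def)
  with issued no_reset show ?thesis by (simp add: slot_settled_def)
qed

lemma slot_settled_stable: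
  assumes ex: "uexec \<delta> s0 \<sigma> sch n" and "a \<le> b" "b \<le> n" "slot_settled (\<sigma> a) t q"
  shows "slot_settled (\<sigma> b) t q"
  using assms(2-4)
proof (induction b rule: dec_induct)
  case (step b)
  then show ?case using slot_settled_step[OF uexec_step[OF ex]] by simp
qed simp

lemma read_S_slot_settled:
  "invariant c \<Longrightarrow> pc (lc c x) \<in> {L7,L8,L9,L10,L11,L12} \<Longrightarrow> pS (lc c x) = HProc q \<Longrightarrow>
   slot_settled c (tS (lc c x)) q"
  by (auto simp: invariant_def slot_settled_def read_S_slot_answered_def read_S_stamp_issued_def
      read_S_slot_not_resetting_def)

lemma later_reader_finds_slot_settled:
  assumes ex: "uexec \<delta> s0 \<sigma> sch n"
    and written: "Sv (\<sigma> a) = (t, s, r, HProc q)"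
    and read: "a \<le> j" "Sv (\<sigma> j) = (tS (lc (\<sigma> k) x), s', r', pS (lc (\<sigma> k) x))"
    and "j \<le> k" "k \<le> n" and at: "pc (lc (\<sigma> k) x) \<in> {L7,L8,L9,L10,L11,L12}"
  shows "slot_settled (\<sigma> k) t q"
proof (cases "Sv (\<sigma> j) = Sv (\<sigma> a)")
  case True
  then have "tS (lc (\<sigma> k) x) = t" "pS (lc (\<sigma> k) x) = HProc q" using written read by simp_all
  then show ?thesis using read_S_slot_settled[OF invariant_reachable[OF ex \<open>k \<le> n\<close>] at] by simp
next
  case False
  then obtain u where u: "a \<le> u" "u < j" "pc (lc (\<sigma> u) (sch u)) = L12"
    "Sv (\<sigma> a) = (tS (lc (\<sigma> u) (sch u)), sS (lc (\<sigma> u) (sch u)), rS (lc (\<sigma> u) (sch u)), pS (lc (\<sigma> u) (sch u)))"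
    using S_overwritten[OF ex read(1)] \<open>j \<le> k\<close> \<open>k \<le> n\<close> by auto
  then have "slot_settled (\<sigma> u) t q"
    using read_S_slot_settled[OF invariant_reachable[OF ex]] written \<open>j \<le> k\<close> \<open>k \<le> n\<close> by auto
  moreover have "u \<le> k" using u \<open>j \<le> k\<close> by simp
  ultimately show ?thesis using slot_settled_stable[OF ex] \<open>k \<le> n\<close> by blast
qed

lemma line12_iteration:
  assumes ex: "uexec \<delta> s0 \<sigma> sch n" and "k \<le> n" and at: "pc (lc (\<sigma> k) x) = L12"
  obtains j5 j9 s r where "j5 < j9" "j9 < k"
    "exec_line \<sigma> sch j5 x L5" "\<forall>m. j5 < m \<and> m < k \<longrightarrow> \<not> exec_line \<sigma> sch m x L5"
    "exec_line \<sigma> sch j9 x L9" "Sv (\<sigma> j5) = (tS (lc (\<sigma> j9) x), s, r, pS (lc (\<sigma> j9) x))"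
    "deref (Hv (\<sigma> j9)) (pA (lc (\<sigma> k) x)) = (tA (lc (\<sigma> k) x), Null)"
proof -
  obtain j5 s r where j5: "j5 < k" "exec_line \<sigma> sch j5 x L5"
      "\<forall>m. j5 < m \<and> m < k \<longrightarrow> \<not> exec_line \<sigma> sch m x L5"
    and S_read: "Sv (\<sigma> j5) = (tS (lc (\<sigma> k) x), s, r, pS (lc (\<sigma> k) x))"
    using last_S_read[OF ex \<open>k \<le> n\<close>, of x] at by auto
  obtain j9 where j9: "j9 < k" "exec_line \<sigma> sch j9 x L9"
      "\<forall>m. j9 < m \<and> m < k \<longrightarrow> \<not> exec_line \<sigma> sch m x L5"
      "tS (lc (\<sigma> j9) x) = tS (lc (\<sigma> k) x)" "pS (lc (\<sigma> j9) x) = pS (lc (\<sigma> k) x)"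
    and slot_read: "deref (Hv (\<sigma> j9)) (pA (lc (\<sigma> k) x)) = (th (lc (\<sigma> k) x), rh (lc (\<sigma> k) x))"
    using last_slot_read[OF ex \<open>k \<le> n\<close>, of x] at by auto
  have "th (lc (\<sigma> k) x) = tA (lc (\<sigma> k) x) \<and> rh (lc (\<sigma> k) x) = Null"
    using invariant_reachable[OF ex \<open>k \<le> n\<close>] at by (simp add: invariant_def check_passed_def)
  moreover have "j5 \<noteq> j9" using j5(2) j9(2) by (auto simp: exec_line_def)
  moreover have "\<not> j9 < j5" using j5(1,2) j9(3) by blast
  ultimately show thesis using that[of j5 j9 s r] j5 j9 S_read slot_read by simp
qed

theorem mainTheorem11:
  fixes \<delta> :: "('s \<times> 'o \<times> 's \<times> 'r) set" and s0 :: 's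
    and \<sigma> :: "nat \<Rightarrow> ('o,'s,'r,'p) conf" and sch :: "nat \<Rightarrow> 'p"
    and n T T' :: nat and p p' :: 'p and op :: "'p operation"
  assumes "uexec \<delta> s0 \<sigma> sch n"
    and "is_operation \<sigma> sch n op"
    and "line12_for \<sigma> sch T p op" and "gcas12_true \<sigma> T p"
    and "T < T'" and "T' < n"
    and "line12_for \<sigma> sch T' p' op"
  shows "\<exists>T1<T. exec_line \<sigma> sch T1 p' L5 \<and>
           (\<forall>k. T1 < k \<and> k < T' \<longrightarrow> \<not> exec_line \<sigma> sch k p' L5)"
proof -
  note ex = assms(1)
  have at12: "pc (lc (\<sigma> T') p') = L12" "tA (lc (\<sigma> T') p') = t_of op" "pA (lc (\<sigma> T') p') = h_of op"
    using assms(7) by (auto simp: line12_for_def exec_line_def)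
  obtain j5 j9 s r where order: "j5 < j9" "j9 < T'" and j5: "exec_line \<sigma> sch j5 p' L5"
      "\<forall>m. j5 < m \<and> m < T' \<longrightarrow> \<not> exec_line \<sigma> sch m p' L5"
    and j9: "exec_line \<sigma> sch j9 p' L9" and read: "Sv (\<sigma> j5) = (tS (lc (\<sigma> j9) p'), s, r, pS (lc (\<sigma> j9) p'))"
    and slot_read: "deref (Hv (\<sigma> j9)) (h_of op) = (t_of op, Null)"
    using line12_iteration[OF ex less_imp_le[OF assms(6)] at12(1)] at12 by metis
  then obtain q t where op: "op = Inv q t" and null: "Hv (\<sigma> j9) q = (t, Null)"
    by (cases op) (auto simp: deref_def)
  have "j5 < T"
  proof (rule ccontr)
    assume "\<not> j5 < T"
    moreover have "j5 \<noteq> T" using j5 assms(3) by (auto simp: line12_for_def exec_line_def)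
    ultimately have "Suc T \<le> j5" by simp
    have written: "Sv (\<sigma> (Suc T)) = (t, sN (lc (\<sigma> T) p), Resp (rN (lc (\<sigma> T) p)), HProc q)"
      using ustep_line12_success[OF uexec_step[OF ex]] assms(3-6) op
      by (auto simp: line12_for_def exec_line_def gcas12_true_def Let_def)
    have "pc (lc (\<sigma> j9) p') \<in> {L7,L8,L9,L10,L11,L12}" using j9 by (simp add: exec_line_def)
    then have "slot_settled (\<sigma> j9) t q"
      using later_reader_finds_slot_settled[OF ex written _ read] \<open>Suc T \<le> j5\<close> order assms(6)
      by simp
    with null show False by (simp add: slot_settled_def)
  qed
  with j5 show ?thesis by blast
qed

end
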